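(* Let $1\le s\le d/2$ and $n\ge d+1$, and let $\mathcal F\subseteq\binom{[n]}{d+1}$ be an $s$-witness family, where for each $F\in\mathcal F$ a witness $B_F\subseteq F$ with $|B_F|=s$ (so that $F\cap F'\ne B_F$ for all $F'\in\mathcal F$) has been fixed. Let $\mathcal B=\{B\in\binom{[n]}{s}: \exists F\in\mathcal F \text{ with } B_F=B\}$. Then there is a constant $C_d$ depending only on $d$ such that for every $B\in\mathcal B$ there exists a family $\mathcal A_B$ of subsets of $[n]\setminus B$, each of size at most $d+1-s$, satisfying: (1) $\mathcal A_B$ is intersecting, i.e. $A\cap A'\neq\varnothing$ for all $A,A'\in\mathcal A_B$; (2) for every $F\in\mathcal F$ with $B_F=B$, there exists $A\in\mathcal A_B$ with $A\subseteq F$; (3) for every $F\in\mathcal F$ with $B\subseteq F$ (possibly $B_F\ne B$), we have $A\cap F\neq\varnothing$ for all $A\in\mathcal A_B$; (4) $|\mathcal A_B|\le C_d$.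
   Context: $[n]=\{1,\dots,n\}$ and $\binom{[n]}{k}$ denotes the family of all $k$-element subsets of $[n]$. For $n\ge d+1$ and $0\le s\le d$, a family $\mathcal F\subseteq\binom{[n]}{d+1}$ is an $s$-witness family if for every $F\in\mathcal F$ there exists $B_F\subseteq F$ with $|B_F|=s$ such that $F\cap F'\neq B_F$ for every $F'\in\mathcal F$; such $B_F$ is called a witness of $F$. *)

theory Defs
  imports Main
begin

definition is_witness :: "nat set set \<Rightarrow> nat \<Rightarrow> nat set \<Rightarrow> nat set \<Rightarrow> bool" where
  "is_witness \<F> s F B \<longleftrightarrow> B \<subseteq> F \<and> card B = s \<and> (\<forall>F'\<in>\<F>. F \<inter> F' \<noteq> B)"

definition uniform_family :: "nat \<Rightarrow> nat \<Rightarrow> nat set set \<Rightarrow> bool" where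
  "uniform_family n d \<F> \<longleftrightarrow> (\<forall>F\<in>\<F>. F \<subseteq> {1..n} \<and> card F = d + 1)"

end

theory Submission
  imports Defs
begin

text \<open>
  Fix B and put k = d + 1 - s. The links F - B of the sets F \<supseteq> B form a family K of
  k-sets, and the links of the sets witnessed by B form an intersecting subfamily H each of
  whose members meets every member of K, since F \<inter> F' \<noteq> B = BF F. Hence H itself has the
  required properties (1)-(3). Among all families with these properties take one, \<A>, of
  least total size. Shrinking a member of \<A> to a proper subset that still meets every set
  of K \<union> \<A> would keep (1)-(3), so every member of \<A> is a minimal transversal of K \<union> \<A>
  of size at most k. A family of k-sets has at most (k + 1)^k such minimal transversals, by
  the usual branching argument: a transversal must contain one of the at most k elements of
  a set it has not yet hit.
\<close>

definition transversal :: "'a set set \<Rightarrow> 'a set \<Rightarrow> bool" where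
  "transversal E A \<longleftrightarrow> (\<forall>X\<in>E. A \<inter> X \<noteq> {})"

definition minimal_transversal :: "'a set set \<Rightarrow> 'a set \<Rightarrow> bool" where
  "minimal_transversal E A \<longleftrightarrow> transversal E A \<and> (\<forall>A0. A0 \<subset> A \<longrightarrow> \<not> transversal E A0)"

definition intersecting :: "'a set set \<Rightarrow> bool" where
  "intersecting \<A> \<longleftrightarrow> (\<forall>A\<in>\<A>. \<forall>A'\<in>\<A>. A \<inter> A' \<noteq> {})"

definition minimal_transversal_extensions :: "'a set set \<Rightarrow> 'a set \<Rightarrow> nat \<Rightarrow> 'a set set" where
  "minimal_transversal_extensions E S t =
     {A. finite A \<and> S \<subseteq> A \<and> card (A - S) \<le> t \<and> minimal_transversal E A}"

lemma minimal_transversal_extensions_of_transversal: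
  assumes "transversal E S"
  shows "minimal_transversal_extensions E S t \<subseteq> {S}"
  using assms by (auto simp: minimal_transversal_extensions_def minimal_transversal_def)

lemma minimal_transversal_extensions_branch:
  assumes "X \<in> E" "S \<inter> X = {}"
  shows "minimal_transversal_extensions E S (Suc t)
           \<subseteq> (\<Union>x\<in>X. minimal_transversal_extensions E (insert x S) t)"
proof
  fix A assume "A \<in> minimal_transversal_extensions E S (Suc t)"
  then have A: "finite A" "S \<subseteq> A" "card (A - S) \<le> Suc t" "minimal_transversal E A"
    by (simp_all add: minimal_transversal_extensions_def)
  then have "transversal E A"
    by (simp add: minimal_transversal_def)
  then obtain x where x: "x \<in> A" "x \<in> X"
    using assms(1) unfolding transversal_def by blast
  with assms(2) have "A - insert x S = (A - S) - {x}" "x \<in> A - S" by auto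
  with A have "card (A - insert x S) \<le> t"
    by (simp add: card_Diff_singleton)
  with A x show "A \<in> (\<Union>x\<in>X. minimal_transversal_extensions E (insert x S) t)"
    by (auto simp: minimal_transversal_extensions_def)
qed

lemma minimal_transversal_extensions_0_empty:
  assumes "\<not> transversal E S"
  shows "minimal_transversal_extensions E S 0 = {}"
  using assms by (auto simp: minimal_transversal_extensions_def minimal_transversal_def)

lemma finite_card_minimal_transversal_extensions:
  assumes "\<forall>X\<in>E. finite X \<and> card X \<le> r"
  shows "finite (minimal_transversal_extensions E S t) \<and>
         card (minimal_transversal_extensions E S t) \<le> (r + 1) ^ t"
proof (induction t arbitrary: S)
  case 0
  show ?case
  proof (cases "transversal E S")
    case True
    then show ?thesis
      using minimal_transversal_extensions_of_transversal[OF True, of 0]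
      by (auto simp: subset_singleton_iff)
  next
    case False
    then show ?thesis by (simp add: minimal_transversal_extensions_0_empty)
  qed
next
  case (Suc t)
  show ?case
  proof (cases "transversal E S")
    case True
    then have "minimal_transversal_extensions E S (Suc t) \<subseteq> {S}"
      by (rule minimal_transversal_extensions_of_transversal)
    then show ?thesis
      using one_le_power[of "r + 1" "Suc t"] by (auto simp: subset_singleton_iff)
  next
    case False
    then obtain X where X: "X \<in> E" "S \<inter> X = {}" by (auto simp: transversal_def)
    let ?U = "\<Union>x\<in>X. minimal_transversal_extensions E (insert x S) t"
    have fX: "finite X" "card X \<le> r" using assms X by auto
    have "finite ?U" using fX Suc.IH by blast
    have "card ?U \<le> (\<Sum>x\<in>X. card (minimal_transversal_extensions E (insert x S) t))"
      by (rule card_UN_le[OF fX(1)])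
    also have "\<dots> \<le> card X * (r + 1) ^ t"
      using sum_mono[of X _ "\<lambda>_. (r + 1) ^ t"] Suc.IH by simp
    also have "\<dots> \<le> (r + 1) * (r + 1) ^ t"
      using fX(2) by (intro mult_right_mono) simp_all
    also have "\<dots> = (r + 1) ^ Suc t"
      by simp
    finally have bound: "card ?U \<le> (r + 1) ^ Suc t" .
    have branch: "minimal_transversal_extensions E S (Suc t) \<subseteq> ?U"
      by (rule minimal_transversal_extensions_branch[OF X])
    have "card (minimal_transversal_extensions E S (Suc t)) \<le> (r + 1) ^ Suc t"
      using card_mono[OF \<open>finite ?U\<close> branch] bound by (rule le_trans)
    with finite_subset[OF branch \<open>finite ?U\<close>] show ?thesis ..
  qed
qed

lemma finite_card_minimal_transversals:
  assumes "\<forall>X\<in>E. finite X \<and> card X \<le> r"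
  shows "card {A. finite A \<and> card A \<le> t \<and> minimal_transversal E A} \<le> (r + 1) ^ t"
    and "finite {A. finite A \<and> card A \<le> t \<and> minimal_transversal E A}"
  using finite_card_minimal_transversal_extensions[OF assms, of "{}" t]
  by (simp_all add: minimal_transversal_extensions_def)

definition intersecting_cover :: "'a set \<Rightarrow> nat \<Rightarrow> 'a set set \<Rightarrow> 'a set set \<Rightarrow> 'a set set \<Rightarrow> bool"
  where
  "intersecting_cover U k H K \<A> \<longleftrightarrow>
     finite \<A> \<and> (\<forall>A\<in>\<A>. A \<subseteq> U \<and> card A \<le> k) \<and> intersecting \<A> \<and>
     (\<forall>X\<in>H. \<exists>A\<in>\<A>. A \<subseteq> X) \<and> (\<forall>A\<in>\<A>. transversal K A)"

lemma intersecting_cover_self: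
  assumes "finite H" "\<forall>X\<in>H. X \<subseteq> U \<and> card X \<le> k" "intersecting H" "\<forall>X\<in>H. transversal K X"
  shows "intersecting_cover U k H K H"
  using assms by (auto simp: intersecting_cover_def)

lemma intersecting_cover_shrink:
  assumes cover: "intersecting_cover U k H K \<A>" and "finite U" "A \<in> \<A>" "A0 \<subseteq> A"
    and A0: "transversal (K \<union> \<A>) A0"
  shows "intersecting_cover U k H K (insert A0 (\<A> - {A}))"
proof -
  from cover have small: "\<forall>B\<in>\<A>. B \<subseteq> U \<and> card B \<le> k" and "intersecting \<A>"
    and covers: "\<forall>X\<in>H. \<exists>B\<in>\<A>. B \<subseteq> X" and "\<forall>B\<in>\<A>. transversal K B" "finite \<A>"
    by (simp_all add: intersecting_cover_def)
  have "finite A"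
    using small \<open>A \<in> \<A>\<close> \<open>finite U\<close> finite_subset by blast
  then have "card A0 \<le> card A"
    using \<open>A0 \<subseteq> A\<close> by (rule card_mono)
  then have "A0 \<subseteq> U \<and> card A0 \<le> k"
    using small \<open>A \<in> \<A>\<close> \<open>A0 \<subseteq> A\<close> by force
  moreover have "intersecting (insert A0 (\<A> - {A}))"
  proof -
    have meets: "A0 \<inter> B \<noteq> {}" if "B \<in> \<A>" for B
      using A0 that by (simp add: transversal_def)
    moreover have "A0 \<inter> A0 \<noteq> {}"
      using meets[OF \<open>A \<in> \<A>\<close>] \<open>A0 \<subseteq> A\<close> by (simp add: Int_absorb2)
    ultimately show ?thesis
      using \<open>intersecting \<A>\<close> unfolding intersecting_def by (auto simp: Int_commute)
  qed
  moreover have "\<forall>X\<in>H. \<exists>B\<in>insert A0 (\<A> - {A}). B \<subseteq> X"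
  proof
    fix X assume "X \<in> H"
    then obtain B where "B \<in> \<A>" "B \<subseteq> X"
      using covers by blast
    then show "\<exists>B\<in>insert A0 (\<A> - {A}). B \<subseteq> X"
      using \<open>A0 \<subseteq> A\<close> by (cases "B = A") auto
  qed
  moreover have "transversal K A0"
    using A0 by (simp add: transversal_def)
  ultimately show ?thesis
    using small \<open>finite \<A>\<close> \<open>\<forall>B\<in>\<A>. transversal K B\<close>
    by (simp add: intersecting_cover_def)
qed

lemma least_intersecting_cover_minimal_transversal:
  assumes cover: "intersecting_cover U k H K \<A>"
    and least: "\<And>\<A>'. intersecting_cover U k H K \<A>' \<Longrightarrow> (\<Sum>A\<in>\<A>. card A) \<le> (\<Sum>A\<in>\<A>'. card A)"
    and "finite U" "A \<in> \<A>"
  shows "minimal_transversal (K \<union> \<A>) A"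
proof -
  have fin: "finite \<A>" "finite A"
    using cover \<open>finite U\<close> \<open>A \<in> \<A>\<close> by (auto simp: intersecting_cover_def intro: finite_subset)
  have "\<not> transversal (K \<union> \<A>) A0" if "A0 \<subset> A" for A0
  proof
    assume "transversal (K \<union> \<A>) A0"
    then have "(\<Sum>A\<in>\<A>. card A) \<le> (\<Sum>A\<in>insert A0 (\<A> - {A}). card A)"
      using least intersecting_cover_shrink[OF cover \<open>finite U\<close> \<open>A \<in> \<A>\<close>] \<open>A0 \<subset> A\<close> by blast
    also have "\<dots> \<le> card A0 + (\<Sum>A\<in>\<A> - {A}. card A)"
      using fin by (simp add: sum.insert_if)
    also have "\<dots> < card A + (\<Sum>A\<in>\<A> - {A}. card A)"
      using psubset_card_mono[OF fin(2) \<open>A0 \<subset> A\<close>] by simp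
    also have "\<dots> = (\<Sum>A\<in>\<A>. card A)"
      using fin \<open>A \<in> \<A>\<close> by (simp add: sum.remove)
    finally show False by simp
  qed
  with cover \<open>A \<in> \<A>\<close> show ?thesis
    by (auto simp: minimal_transversal_def transversal_def intersecting_cover_def intersecting_def)
qed

lemma small_intersecting_cover_exists:
  assumes "intersecting_cover U k H K \<A>0" "finite U" "\<forall>X\<in>K. finite X \<and> card X \<le> k"
  shows "\<exists>\<A>. intersecting_cover U k H K \<A> \<and> card \<A> \<le> (k + 1) ^ k"
proof -
  obtain \<A> where cover: "intersecting_cover U k H K \<A>"
    and least: "\<And>\<A>'. intersecting_cover U k H K \<A>' \<Longrightarrow> (\<Sum>A\<in>\<A>. card A) \<le> (\<Sum>A\<in>\<A>'. card A)"
    using ex_has_least_nat[of "intersecting_cover U k H K" \<A>0 "\<lambda>\<A>. \<Sum>A\<in>\<A>. card A"] assms(1)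
    by blast
  have small: "finite A \<and> card A \<le> k" if "A \<in> \<A>" for A
    using cover that \<open>finite U\<close> by (auto simp: intersecting_cover_def intro: finite_subset)
  let ?M = "{A. finite A \<and> card A \<le> k \<and> minimal_transversal (K \<union> \<A>) A}"
  have "\<forall>X\<in>K \<union> \<A>. finite X \<and> card X \<le> k"
    using assms(3) small by blast
  note M = finite_card_minimal_transversals[OF this, of k]
  have "\<A> \<subseteq> ?M"
    using least_intersecting_cover_minimal_transversal[OF cover least \<open>finite U\<close>] small by blast
  then have "card \<A> \<le> (k + 1) ^ k"
    using card_mono[OF M(2)] M(1) by (blast intro: le_trans)
  with cover show ?thesis by auto
qed

lemma witness_links_intersect:
  assumes "is_witness \<F> s F B" "F' \<in> \<F>" "B \<subseteq> F'"
  shows "(F - B) \<inter> (F' - B) \<noteq> {}"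
proof -
  have "B \<subseteq> F" "F \<inter> F' \<noteq> B"
    using assms(1,2) by (simp_all add: is_witness_def)
  with \<open>B \<subseteq> F'\<close> show ?thesis by blast
qed

lemma uniform_family_card_link:
  assumes "uniform_family n d \<F>" "F \<in> \<F>" "B \<subseteq> F"
  shows "finite (F - B)" "card (F - B) = d + 1 - card B"
  using assms by (auto simp: uniform_family_def card_Diff_subset finite_subset)

lemma witness_links_intersecting_cover:
  assumes uniform: "uniform_family n d \<F>" and witness: "\<forall>F\<in>\<F>. is_witness \<F> s F (BF F)"
    and "card B = s"
  shows "intersecting_cover ({1..n} - B) (d + 1 - s)
           {F - B | F. F \<in> \<F> \<and> BF F = B} {F - B | F. F \<in> \<F> \<and> B \<subseteq> F}
           {F - B | F. F \<in> \<F> \<and> BF F = B}"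
proof (rule intersecting_cover_self)
  let ?H = "{F - B | F. F \<in> \<F> \<and> BF F = B}" and ?K = "{F - B | F. F \<in> \<F> \<and> B \<subseteq> F}"
  have witnessed: "is_witness \<F> s F B" "B \<subseteq> F" if "F \<in> \<F>" "BF F = B" for F
    using witness that by (auto simp: is_witness_def)
  have "?H \<subseteq> Pow {1..n}"
    using uniform by (auto simp: uniform_family_def)
  then show "finite ?H"
    by (rule finite_subset) simp
  show "\<forall>X\<in>?H. X \<subseteq> {1..n} - B \<and> card X \<le> d + 1 - s"
  proof
    fix X assume "X \<in> ?H"
    then obtain F where "X = F - B" "F \<in> \<F>" "BF F = B" by blast
    then show "X \<subseteq> {1..n} - B \<and> card X \<le> d + 1 - s"
      using uniform_family_card_link[OF uniform \<open>F \<in> \<F>\<close> witnessed(2)] uniform \<open>card B = s\<close>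
      by (auto simp: uniform_family_def)
  qed
  have "transversal ?K X" if "X \<in> ?H" for X
    unfolding transversal_def
  proof
    fix Y assume "Y \<in> ?K"
    then obtain F' where "Y = F' - B" "F' \<in> \<F>" "B \<subseteq> F'" by blast
    moreover obtain F where "X = F - B" "F \<in> \<F>" "BF F = B"
      using \<open>X \<in> ?H\<close> by blast
    ultimately show "X \<inter> Y \<noteq> {}"
      using witness_links_intersect[OF witnessed(1)] by blast
  qed
  then show "\<forall>X\<in>?H. transversal ?K X" ..
  have H_K: "?H \<subseteq> ?K"
  proof
    fix X assume "X \<in> ?H"
    then obtain F where "X = F - B" "F \<in> \<F>" "BF F = B" by blast
    with witnessed(2) show "X \<in> ?K" by auto
  qed
  show "intersecting ?H"
    unfolding intersecting_def
  proof (intro ballI)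
    fix X Y assume "X \<in> ?H" "Y \<in> ?H"
    have "transversal ?K X"
      using \<open>\<forall>X\<in>?H. transversal ?K X\<close> \<open>X \<in> ?H\<close> by (rule bspec)
    then show "X \<inter> Y \<noteq> {}"
      using subsetD[OF H_K \<open>Y \<in> ?H\<close>] unfolding transversal_def by (rule bspec)
  qed
qed

lemma witness_family_small_link_cover:
  assumes uniform: "uniform_family n d \<F>" and witness: "\<forall>F\<in>\<F>. is_witness \<F> s F (BF F)"
    and "card B = s"
  shows "\<exists>\<A>. (\<forall>A\<in>\<A>. A \<subseteq> {1..n} - B \<and> card A \<le> d + 1 - s) \<and> intersecting \<A> \<and>
           (\<forall>F\<in>\<F>. BF F = B \<longrightarrow> (\<exists>A\<in>\<A>. A \<subseteq> F)) \<and>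
           (\<forall>F\<in>\<F>. B \<subseteq> F \<longrightarrow> (\<forall>A\<in>\<A>. A \<inter> F \<noteq> {})) \<and>
           card \<A> \<le> (d + 2) ^ (d + 1)"
proof -
  let ?H = "{F - B | F. F \<in> \<F> \<and> BF F = B}" and ?K = "{F - B | F. F \<in> \<F> \<and> B \<subseteq> F}"
  have K_small: "\<forall>X\<in>?K. finite X \<and> card X \<le> d + 1 - s"
  proof
    fix X assume "X \<in> ?K"
    then obtain F where "X = F - B" "F \<in> \<F>" "B \<subseteq> F" by blast
    then show "finite X \<and> card X \<le> d + 1 - s"
      using uniform_family_card_link[OF uniform \<open>F \<in> \<F>\<close> \<open>B \<subseteq> F\<close>] \<open>card B = s\<close> by simp
  qed
  have "finite ({1..n} - B)"
    by simp
  with witness_links_intersecting_cover[OF uniform witness \<open>card B = s\<close>] K_small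
  obtain \<A> where cover: "intersecting_cover ({1..n} - B) (d + 1 - s) ?H ?K \<A>"
    and card: "card \<A> \<le> (d + 1 - s + 1) ^ (d + 1 - s)"
    by (blast dest: small_intersecting_cover_exists)
  have "(d + 1 - s + 1) ^ (d + 1 - s) \<le> (d + 2) ^ (d + 1 - s)"
    by (rule power_mono) simp_all
  also have "\<dots> \<le> (d + 2) ^ (d + 1)"
    by (rule power_increasing) simp_all
  finally have "card \<A> \<le> (d + 2) ^ (d + 1)"
    using card by (rule le_trans[rotated])
  moreover have "\<exists>A\<in>\<A>. A \<subseteq> F" if "F \<in> \<F>" "BF F = B" for F
  proof -
    have "F - B \<in> ?H"
      using that by blast
    with cover obtain A where "A \<in> \<A>" "A \<subseteq> F - B"
      unfolding intersecting_cover_def by blast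
    then show ?thesis by blast
  qed
  moreover have "A \<inter> F \<noteq> {}" if "F \<in> \<F>" "B \<subseteq> F" "A \<in> \<A>" for F A
  proof -
    have "F - B \<in> ?K"
      using that(1,2) by blast
    have "transversal ?K A"
      using cover that(3) by (simp add: intersecting_cover_def)
    then have "A \<inter> (F - B) \<noteq> {}"
      using \<open>F - B \<in> ?K\<close> unfolding transversal_def by (rule bspec)
    then show ?thesis by blast
  qed
  moreover have "\<forall>A\<in>\<A>. A \<subseteq> {1..n} - B \<and> card A \<le> d + 1 - s" "intersecting \<A>"
    using cover by (simp_all add: intersecting_cover_def)
  ultimately show ?thesis
    by (intro exI[of _ \<A>]) simp
qed

theorem lemma2p2:
  fixes d :: nat
  shows "\<exists>C :: nat. \<forall>(n::nat) (s::nat) (\<F>::nat set set) (BF :: nat set \<Rightarrow> nat set).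
    1 \<le> s \<and> 2 * s \<le> d \<and> d + 1 \<le> n \<and> uniform_family n d \<F> \<and>
    (\<forall>F\<in>\<F>. is_witness \<F> s F (BF F)) \<longrightarrow>
    (\<forall>B \<in> {B. B \<subseteq> {1..n} \<and> card B = s \<and> (\<exists>F\<in>\<F>. BF F = B)}.
      \<exists>\<A> :: nat set set.
        (\<forall>A\<in>\<A>. A \<subseteq> {1..n} - B \<and> card A \<le> d + 1 - s) \<and>
        (\<forall>A\<in>\<A>. \<forall>A'\<in>\<A>. A \<inter> A' \<noteq> {}) \<and>
        (\<forall>F\<in>\<F>. BF F = B \<longrightarrow> (\<exists>A\<in>\<A>. A \<subseteq> F)) \<and>
        (\<forall>F\<in>\<F>. B \<subseteq> F \<longrightarrow> (\<forall>A\<in>\<A>. A \<inter> F \<noteq> {})) \<and>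
        card \<A> \<le> C)"
proof (rule exI[of _ "(d + 2) ^ (d + 1)"], intro allI impI ballI)
  fix n s :: nat and \<F> :: "nat set set" and BF :: "nat set \<Rightarrow> nat set" and B
  assume "1 \<le> s \<and> 2 * s \<le> d \<and> d + 1 \<le> n \<and> uniform_family n d \<F> \<and>
      (\<forall>F\<in>\<F>. is_witness \<F> s F (BF F))"
    and "B \<in> {B. B \<subseteq> {1..n} \<and> card B = s \<and> (\<exists>F\<in>\<F>. BF F = B)}"
  then have "uniform_family n d \<F>" "\<forall>F\<in>\<F>. is_witness \<F> s F (BF F)" "card B = s"
    by simp_all
  from witness_family_small_link_cover[OF this]
  show "\<exists>\<A>. (\<forall>A\<in>\<A>. A \<subseteq> {1..n} - B \<and> card A \<le> d + 1 - s) \<and>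
        (\<forall>A\<in>\<A>. \<forall>A'\<in>\<A>. A \<inter> A' \<noteq> {}) \<and>
        (\<forall>F\<in>\<F>. BF F = B \<longrightarrow> (\<exists>A\<in>\<A>. A \<subseteq> F)) \<and>
        (\<forall>F\<in>\<F>. B \<subseteq> F \<longrightarrow> (\<forall>A\<in>\<A>. A \<inter> F \<noteq> {})) \<and>
        card \<A> \<le> (d + 2) ^ (d + 1)"
    unfolding intersecting_def .
qed

end
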